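(* Let $k\ge1$ be an integer, let $\mathbf G$ be an abelian group, let $A_1,\dots,A_k,B\subseteq\mathbf G$ be finite, let $W,Y\subseteq\mathbf G^k$ be finite and $X,Z\subseteq\mathbf G$ be finite. Then (i) $|W\times X|\cdot|Y-\Delta(Z)|\le|Y\times W\times Z-\Delta(X)|$ (here $Y\times W\times Z\subseteq\mathbf G^{2k+1}$); (ii) for every $m\in\{1,\dots,k-1\}$, $$|A_1\times\dots\times A_k-\Delta(B)|\le|A_1\times\dots\times A_m-\Delta(A_{m+1})|\cdot|A_{m+1}\times\dots\times A_k-\Delta(B)|;$$ (iii) $|Y\times Z-\Delta(X)|=|Y\times X-\Delta(Z)|$ (here $Y\times Z, Y\times X\subseteq\mathbf G^{k+1}$).
   Context: For $S\subseteq\mathbf G$ and an integer $d\ge1$, $\Delta(S)=\Delta_d(S)=\{(s,s,\dots,s)\in\mathbf G^d: s\in S\}$, the dimension $d$ being that of the set it is subtracted from. For $U,V\subseteq\mathbf G^d$, $U-V=\{u-v:u\in U,v\in V\}$ (coordinatewise). *)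

theory Defs
  imports Main
begin

text \<open>Elements of G^d are represented as lists of length d over the abelian group 'a.\<close>

definition diag_diff :: "'a::ab_group_add list set \<Rightarrow> 'a set \<Rightarrow> 'a list set" (infixl "-\<^sub>\<Delta>" 65) where
  "U -\<^sub>\<Delta> S = {map (\<lambda>u. u - s) y | y s. y \<in> U \<and> s \<in> S}"

text \<open>Cartesian product of tuple sets, realised by concatenation (G^a x G^b = G^(a+b)).\<close>
definition tprod :: "'a list set \<Rightarrow> 'a list set \<Rightarrow> 'a list set" (infixr "\<otimes>" 70) where
  "U \<otimes> V = {u @ v | u v. u \<in> U \<and> v \<in> V}"

definition tup1 :: "'a set \<Rightarrow> 'a list set" where
  "tup1 X = (\<lambda>x. [x]) ` X"

end

theory Submission
  imports Defs
begin

text \<open>All three statements are cardinality comparisons proved by explicit injections.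
  For (i), choose for each \<open>d \<in> Y -\<^sub>\<Delta> Z\<close> a representation \<open>d = y - z\<close>; then
  \<open>((w, x), d) \<mapsto> (y, w, z) - x\<close> is injective, because \<open>d\<close> is recovered as the first \<open>k\<close>
  coordinates minus the last one, after which \<open>x\<close> and \<open>w\<close> can be read off.
  For (ii), \<open>a - b \<mapsto> ((a\<^sub>1, \<dots>, a\<^sub>m) - a\<^sub>m\<^sub>+\<^sub>1, (a\<^sub>m\<^sub>+\<^sub>1, \<dots>, a\<^sub>k) - b)\<close> is injective.
  For (iii), \<open>(y, z) - x \<mapsto> (y - z, -z)\<close> is an involution exchanging the roles of \<open>X\<close> and \<open>Z\<close>.\<close>

lemma mem_listset_iff_list_all2: "l \<in> listset As \<longleftrightarrow> list_all2 (\<in>) l As"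
  by (induction As arbitrary: l) (auto simp: set_Cons_def list_all2_Cons2)

lemma finite_listset: "\<forall>A\<in>set As. finite A \<Longrightarrow> finite (listset As)"
proof (induction As)
  case (Cons A As)
  have "set_Cons A (listset As) = (\<lambda>(x, xs). x # xs) ` (A \<times> listset As)"
    by (auto simp: set_Cons_def)
  with Cons show ?case by auto
qed simp

lemma diag_diff_eq_image: "U -\<^sub>\<Delta> S = (\<lambda>(y, s). map (\<lambda>u. u - s) y) ` (U \<times> S)"
  by (auto simp: diag_diff_def)

lemma map_minus_mem_diag_diff: "y \<in> U \<Longrightarrow> s \<in> S \<Longrightarrow> map (\<lambda>u. u - s) y \<in> U -\<^sub>\<Delta> S"
  by (auto simp: diag_diff_def)

lemma finite_diag_diff: "finite U \<Longrightarrow> finite S \<Longrightarrow> finite (U -\<^sub>\<Delta> S)"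
  by (simp add: diag_diff_eq_image)

lemma tprod_eq_image: "U \<otimes> V = (\<lambda>(u, v). u @ v) ` (U \<times> V)"
  by (auto simp: tprod_def)

lemma finite_tprod: "finite U \<Longrightarrow> finite V \<Longrightarrow> finite (U \<otimes> V)"
  by (simp add: tprod_eq_image)

lemma card_product_diag_diff_le:
  fixes X Z :: "'a::ab_group_add set" and W Y :: "'a list set"
  assumes "\<forall>y\<in>Y. length y = k"
    and "finite W" "finite Y" "finite X" "finite Z"
  shows "card (W \<times> X) * card (Y -\<^sub>\<Delta> Z) \<le> card ((Y \<otimes> W \<otimes> tup1 Z) -\<^sub>\<Delta> X)"
proof -
  define D where "D = (\<lambda>(y, z). map (\<lambda>u. u - z) y :: 'a list)"
  define rep where "rep = inv_into (Y \<times> Z) D"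
  have rep: "rep d \<in> Y \<times> Z" "D (rep d) = d" if "d \<in> Y -\<^sub>\<Delta> Z" for d
    using that unfolding rep_def diag_diff_eq_image D_def[symmetric]
    by (auto intro: inv_into_into f_inv_into_f)
  define F where "F = (\<lambda>((w, x), d). case rep d of (y, z) \<Rightarrow> map (\<lambda>u. u - x) (y @ w @ [z]))"
  define decode where "decode l =
      (let d = map (\<lambda>u. u - last l) (take k l); x = snd (rep d) - last l
       in ((map (\<lambda>u. u + x) (butlast (drop k l)), x), d))" for l
  have "decode (F ((w, x), d)) = ((w, x), d)" if d: "d \<in> Y -\<^sub>\<Delta> Z" for w x d
  proof -
    obtain y z where yz: "rep d = (y, z)" "y \<in> Y" "d = map (\<lambda>u. u - z) y"
      using rep[OF d] by (auto simp: D_def split: prod.splits)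
    have "F ((w, x), d) = map (\<lambda>u. u - x) (y @ w @ [z])"
      by (simp add: F_def yz(1))
    moreover have "length y = k" using yz(2) assms(1) by simp
    ultimately show ?thesis
      using yz by (simp add: decode_def comp_def butlast_append)
  qed
  then have "inj_on F ((W \<times> X) \<times> (Y -\<^sub>\<Delta> Z))"
    by (intro inj_on_inverseI[where g = decode]) auto
  moreover have "F ` ((W \<times> X) \<times> (Y -\<^sub>\<Delta> Z)) \<subseteq> (Y \<otimes> W \<otimes> tup1 Z) -\<^sub>\<Delta> X"
  proof clarify
    fix w x d assume "w \<in> W" "x \<in> X" and d: "d \<in> Y -\<^sub>\<Delta> Z"
    obtain y z where "rep d = (y, z)" "y \<in> Y" "z \<in> Z"
      using rep(1)[OF d] by auto
    then have "y @ w @ [z] \<in> Y \<otimes> W \<otimes> tup1 Z"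
      using \<open>w \<in> W\<close> unfolding tprod_def tup1_def by blast
    with \<open>x \<in> X\<close> \<open>rep d = (y, z)\<close> show "F ((w, x), d) \<in> (Y \<otimes> W \<otimes> tup1 Z) -\<^sub>\<Delta> X"
      unfolding F_def by (simp add: map_minus_mem_diag_diff del: map_append)
  qed
  moreover have "finite ((Y \<otimes> W \<otimes> tup1 Z) -\<^sub>\<Delta> X)"
    using assms by (simp add: finite_diag_diff finite_tprod tup1_def)
  ultimately have "card ((W \<times> X) \<times> (Y -\<^sub>\<Delta> Z)) \<le> card ((Y \<otimes> W \<otimes> tup1 Z) -\<^sub>\<Delta> X)"
    by (rule card_inj_on_le)
  then show ?thesis by (simp add: card_cartesian_product)
qed

lemma card_listset_diag_diff_le:
  fixes As :: "'a::ab_group_add set list" and B :: "'a set"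
  assumes "\<forall>A\<in>set As. finite A" "finite B" "m < length As"
  shows "card (listset As -\<^sub>\<Delta> B)
     \<le> card (listset (take m As) -\<^sub>\<Delta> (As ! m)) * card (listset (drop m As) -\<^sub>\<Delta> B)"
proof -
  define G where "G l = (map (\<lambda>u. u - l ! m) (take m l), drop m l)" for l :: "'a list"
  define H where "H = (\<lambda>(a, b). map (\<lambda>u. u + hd b) a @ b :: 'a list)"
  have "H (G l) = l" if "m < length l" for l
    using that by (simp add: G_def H_def comp_def hd_drop_conv_nth)
  moreover have "m < length l" if "l \<in> listset As -\<^sub>\<Delta> B" for l
    using that assms(3)
    by (auto simp: diag_diff_def mem_listset_iff_list_all2 list_all2_lengthD)
  ultimately have "inj_on G (listset As -\<^sub>\<Delta> B)"
    by (metis inj_on_inverseI)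
  moreover have "G ` (listset As -\<^sub>\<Delta> B) \<subseteq>
      (listset (take m As) -\<^sub>\<Delta> (As ! m)) \<times> (listset (drop m As) -\<^sub>\<Delta> B)"
  proof (rule image_subsetI)
    fix l assume "l \<in> listset As -\<^sub>\<Delta> B"
    then obtain a b where "a \<in> listset As" "b \<in> B" and l: "l = map (\<lambda>u. u - b) a"
      by (auto simp: diag_diff_def)
    then have a: "list_all2 (\<in>) a As" by (simp add: mem_listset_iff_list_all2)
    then have "length a = length As" by (rule list_all2_lengthD)
    with a assms(3) have "a ! m \<in> As ! m" "take m a \<in> listset (take m As)"
      "drop m a \<in> listset (drop m As)"
      by (auto simp: mem_listset_iff_list_all2 list_all2_nthD)
    moreover have "G l = (map (\<lambda>u. u - a ! m) (take m a), map (\<lambda>u. u - b) (drop m a))"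
      using \<open>length a = length As\<close> assms(3) by (simp add: G_def l take_map drop_map comp_def)
    ultimately show "G l \<in> (listset (take m As) -\<^sub>\<Delta> (As ! m)) \<times> (listset (drop m As) -\<^sub>\<Delta> B)"
      using \<open>b \<in> B\<close> by (simp add: map_minus_mem_diag_diff)
  qed
  moreover have "finite ((listset (take m As) -\<^sub>\<Delta> (As ! m)) \<times> (listset (drop m As) -\<^sub>\<Delta> B))"
    using assms by (intro finite_cartesian_product finite_diag_diff finite_listset)
      (auto dest: in_set_takeD in_set_dropD)
  ultimately have "card (listset As -\<^sub>\<Delta> B)
      \<le> card ((listset (take m As) -\<^sub>\<Delta> (As ! m)) \<times> (listset (drop m As) -\<^sub>\<Delta> B))"
    by (rule card_inj_on_le)
  then show ?thesis by (simp add: card_cartesian_product)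
qed

lemma mem_tprod_tup1_diag_diff:
  "l \<in> (Y \<otimes> tup1 X) -\<^sub>\<Delta> Z \<longleftrightarrow> (\<exists>y\<in>Y. \<exists>x\<in>X. \<exists>z\<in>Z. l = map (\<lambda>u. u - z) (y @ [x]))"
proof
  assume "l \<in> (Y \<otimes> tup1 X) -\<^sub>\<Delta> Z"
  then show "\<exists>y\<in>Y. \<exists>x\<in>X. \<exists>z\<in>Z. l = map (\<lambda>u. u - z) (y @ [x])"
    by (auto simp: diag_diff_def tprod_def tup1_def simp del: map_append)
next
  assume "\<exists>y\<in>Y. \<exists>x\<in>X. \<exists>z\<in>Z. l = map (\<lambda>u. u - z) (y @ [x])"
  then obtain y x z where "y \<in> Y" "x \<in> X" "z \<in> Z" "l = map (\<lambda>u. u - z) (y @ [x])"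
    by blast
  moreover have "y @ [x] \<in> Y \<otimes> tup1 X"
    using \<open>y \<in> Y\<close> \<open>x \<in> X\<close> by (auto simp: tprod_def tup1_def)
  ultimately show "l \<in> (Y \<otimes> tup1 X) -\<^sub>\<Delta> Z"
    by (simp add: map_minus_mem_diag_diff del: map_append)
qed

lemma card_diag_diff_swap_last:
  fixes X Z :: "'a::ab_group_add set" and Y :: "'a list set"
  shows "card ((Y \<otimes> tup1 Z) -\<^sub>\<Delta> X) = card ((Y \<otimes> tup1 X) -\<^sub>\<Delta> Z)"
proof -
  define \<phi> :: "'a list \<Rightarrow> 'a list" where
    "\<phi> l = map (\<lambda>u. u - last l) (butlast l) @ [- last l]" for l
  have swap: "\<phi> (map (\<lambda>u. u - x) (y @ [z])) = map (\<lambda>u. u - z) (y @ [x])" for x y z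
    by (simp add: \<phi>_def comp_def)
  have maps_to: "\<phi> ` ((Y \<otimes> tup1 Z) -\<^sub>\<Delta> X) \<subseteq> (Y \<otimes> tup1 X) -\<^sub>\<Delta> Z" for X Z
  proof (rule image_subsetI)
    fix l assume "l \<in> (Y \<otimes> tup1 Z) -\<^sub>\<Delta> X"
    then obtain y z x where "y \<in> Y" "z \<in> Z" "x \<in> X" "l = map (\<lambda>u. u - x) (y @ [z])"
      unfolding mem_tprod_tup1_diag_diff by blast
    then show "\<phi> l \<in> (Y \<otimes> tup1 X) -\<^sub>\<Delta> Z"
      unfolding mem_tprod_tup1_diag_diff by (auto simp: swap simp del: map_append)
  qed
  have involution: "\<phi> (\<phi> l) = l" if "l \<in> (Y \<otimes> tup1 X) -\<^sub>\<Delta> Z" for l X Z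
    using that unfolding mem_tprod_tup1_diag_diff by (auto simp: swap simp del: map_append)
  have "bij_betw \<phi> ((Y \<otimes> tup1 Z) -\<^sub>\<Delta> X) ((Y \<otimes> tup1 X) -\<^sub>\<Delta> Z)"
    by (rule bij_betw_byWitness[where f' = \<phi>]) (use involution maps_to in blast)+
  then show ?thesis by (rule bij_betw_same_card)
qed

theorem theorem7:
  fixes k :: nat
    and As :: "'a::ab_group_add set list"
    and B X Z :: "'a set"
    and W Y :: "'a list set"
  assumes "k \<ge> 1"
    and "length As = k" and "\<forall>A\<in>set As. finite A" and "finite B"
    and "finite W" and "\<forall>w\<in>W. length w = k"
    and "finite Y" and "\<forall>y\<in>Y. length y = k"
    and "finite X" and "finite Z"
  shows "(card (W \<times> X) * card (Y -\<^sub>\<Delta> Z) \<le> card ((Y \<otimes> W \<otimes> tup1 Z) -\<^sub>\<Delta> X))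
    \<and> (\<forall>m. 1 \<le> m \<and> m \<le> k - 1 \<longrightarrow>
           card (listset As -\<^sub>\<Delta> B)
             \<le> card (listset (take m As) -\<^sub>\<Delta> (As ! m)) * card (listset (drop m As) -\<^sub>\<Delta> B))
    \<and> card ((Y \<otimes> tup1 Z) -\<^sub>\<Delta> X) = card ((Y \<otimes> tup1 X) -\<^sub>\<Delta> Z)"
proof (intro conjI allI impI)
  show "card (W \<times> X) * card (Y -\<^sub>\<Delta> Z) \<le> card ((Y \<otimes> W \<otimes> tup1 Z) -\<^sub>\<Delta> X)"
    using assms by (intro card_product_diag_diff_le[where k = k])
  fix m assume "1 \<le> m \<and> m \<le> k - 1"
  with assms show "card (listset As -\<^sub>\<Delta> B)
      \<le> card (listset (take m As) -\<^sub>\<Delta> (As ! m)) * card (listset (drop m As) -\<^sub>\<Delta> B)"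
    by (intro card_listset_diag_diff_le) auto
qed (rule card_diag_diff_swap_last)

end
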